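(* Let $\beta>0$ and let $S$ be a possible forest with vertex set $\{v_{s_1},\dots,v_{s_k}\}$, $s_1<\dots<s_k$. Then for every $t\ge s_k$, \[ \Pr(S\subset G^t_{1,\beta})=\frac{\beta}{d_S^{\mathrm{in}}(v_1)+\beta}\prod_{i:\,v_i\in V^-}\frac{\Gamma(1+d_S^{\mathrm{in}}(v_i)+\beta)}{\Gamma(1+\beta)}\prod_{(v_i,v_j)\in E(S),\ i>j}\frac{1}{(2+\beta)(i^{1+\beta}j)^{1/(2+\beta)}}\cdot\exp\!\left(O\!\left(\sum_{j=2}^{k}\frac{c_S(s_j)^2}{j-1}\right)\right), \] where the implied constant in the $O(\cdot)$ does not depend on $S$ or $t$.
   Context: Fix a real $\beta>0$ and a positive integer $m$. The random tree process $(G^n_{1,\beta})_{n\ge1}$ is defined as follows. $G^1_{1,\beta}$ consists of a single vertex $v_1$ and no edges. Given $G^n_{1,\beta}$ with vertices $v_1,\dots,v_n$ and directed edges $e_2,\dots,e_n$ (where $e_i$ is the edge whose tail is $v_i$), $G^{n+1}_{1,\beta}$ is obtained by adding a vertex $v_{n+1}$ and a directed edge $e_{n+1}$ with tail $v_{n+1}$ and head a "target vertex" determined by a random variable $f_{n+1}$, independent of $f_2,\dots,f_n$, taking values in $\Omega_{n+1}=\{(i,v):1\le i\le n\}\cup\{(i,h),(i,t):2\le i\le n\}$ with $\Pr(f_{n+1}=(i,v))=\beta/((2+\beta)n-2)$ and $\Pr(f_{n+1}=(i,h))=\Pr(f_{n+1}=(i,t))=1/((2+\beta)n-2)$. If $f_{n+1}=(i,v)$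 the target is $v_i$ (chosen "uniformly"); if $f_{n+1}=(i,h)$ the target is the head of $e_i$, and if $f_{n+1}=(i,t)$ the target is the tail $v_i$ of $e_i$ (chosen "preferentially", by copying the head half-edge, resp. tail half-edge, of $e_i$). Consequently the target is $v_i$ with probability $(d_n(v_i)+\beta)/((2+\beta)n-2)$, where $d_n(v)$ is the degree of $v$ in $G^n_{1,\beta}$. Each edge is regarded as two half-edges, one at each endpoint; the degree of a vertex is the number of half-edges at it (loops count twice). A possible forest is a directed forest $S$ whose vertices are labelled vertices $v_i$ of the process (identified by their index), with no isolated vertices, in which every vertex has out-degree $0$ or $1$, every edge $(v_i,v_j)$ has $i>j$, and $v_1$ (if present) has out-degree $0$. "$S\subset G^t_{1,\beta}$" means every edge $(v_i,v_j)$ of $S$ is an edge of $G^t_{1,\beta}$ (with labels matching). $d_S^{\mathrm{in}}(v)$ is the in-degree of $v$ in $S$ (taken to be $0$ if $v\notin V(S)$). $V^-=\{v_i\in V(S):\exists j>i,\ (v_j,v_i)\in E(S)\}$. For $t\ge i$, $R_t(i)=|\{j>t:(v_j,v_i)\in E(S)\}|$, and $c_S(i)=\sum_{k=1}^{i-1}R_{i-1}(k)$, i.e. the number of edges of $S$ from $\{v_i,v_{i+1},\dots\}$ to $\{v_1,\dots,v_{i-1}\}$. *)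

theory Defs
  imports "HOL-Probability.Probability"
begin

text \<open>Elements of \<Omega>_{n+1}: (i,v), (i,h), (i,t).\<close>
datatype choice = Cv nat | Ch nat | Ct nat

text \<open>Law of f_{n+1} when the current graph has n vertices (n \<ge> 1).\<close>
definition choice_weight :: "real \<Rightarrow> nat \<Rightarrow> choice \<Rightarrow> real" where
  "choice_weight \<beta> n c = (case c of
     Cv i \<Rightarrow> (if 1 \<le> i \<and> i \<le> n then \<beta> / ((2 + \<beta>) * real n - 2) else 0)
   | Ch i \<Rightarrow> (if 2 \<le> i \<and> i \<le> n then 1 / ((2 + \<beta>) * real n - 2) else 0)
   | Ct i \<Rightarrow> (if 2 \<le> i \<and> i \<le> n then 1 / ((2 + \<beta>) * real n - 2) else 0))"

definition choice_pmf :: "real \<Rightarrow> nat \<Rightarrow> choice pmf" where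
  "choice_pmf \<beta> n = embed_pmf (choice_weight \<beta> n)"

text \<open>A graph of the process is encoded by its head map: hm i = index of the head of e_i
  (for 2 \<le> i \<le> n), and 0 elsewhere.\<close>
definition target :: "(nat \<Rightarrow> nat) \<Rightarrow> choice \<Rightarrow> nat" where
  "target hm c = (case c of Cv i \<Rightarrow> i | Ct i \<Rightarrow> i | Ch i \<Rightarrow> hm i)"

fun tree_pmf :: "real \<Rightarrow> nat \<Rightarrow> (nat \<Rightarrow> nat) pmf" where
  "tree_pmf \<beta> 0 = return_pmf (\<lambda>_. 0)"
| "tree_pmf \<beta> (Suc 0) = return_pmf (\<lambda>_. 0)"
| "tree_pmf \<beta> (Suc (Suc n)) =
     bind_pmf (tree_pmf \<beta> (Suc n)) (\<lambda>hm.
     bind_pmf (choice_pmf \<beta> (Suc n)) (\<lambda>f.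
     return_pmf (hm(Suc (Suc n) := target hm f))))"

definition prob_contained :: "real \<Rightarrow> nat \<Rightarrow> (nat \<times> nat) set \<Rightarrow> real" where
  "prob_contained \<beta> t E =
     measure_pmf.prob (tree_pmf \<beta> t) {hm. \<forall>(i, j) \<in> E. i \<le> t \<and> hm i = j}"

text \<open>Possible forest, given by its edge set (pairs (i,j) meaning edge (v_i,v_j));
  vertices are exactly the endpoints (no isolated vertices).\<close>
definition possible_forest :: "(nat \<times> nat) set \<Rightarrow> bool" where
  "possible_forest E \<longleftrightarrow> finite E \<and>
     (\<forall>(i, j) \<in> E. 1 \<le> j \<and> j < i) \<and>
     (\<forall>i j j'. (i, j) \<in> E \<longrightarrow> (i, j') \<in> E \<longrightarrow> j = j')"

definition fverts :: "(nat \<times> nat) set \<Rightarrow> nat set" where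
  "fverts E = fst ` E \<union> snd ` E"

definition din :: "(nat \<times> nat) set \<Rightarrow> nat \<Rightarrow> nat" where
  "din E v = card {a. (a, v) \<in> E}"

definition vminus :: "(nat \<times> nat) set \<Rightarrow> nat set" where
  "vminus E = {v \<in> fverts E. \<exists>a. a > v \<and> (a, v) \<in> E}"

definition cS :: "(nat \<times> nat) set \<Rightarrow> nat \<Rightarrow> nat" where
  "cS E i = card {(a, b) \<in> E. i \<le> a \<and> b < i}"

text \<open>s_j (1-based): j-th smallest vertex index.\<close>
definition svert :: "(nat \<times> nat) set \<Rightarrow> nat \<Rightarrow> nat" where
  "svert E j = sorted_list_of_set (fverts E) ! (j - 1)"

definition main_term :: "real \<Rightarrow> (nat \<times> nat) set \<Rightarrow> real" where
  "main_term \<beta> E =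
     \<beta> / (real (din E 1) + \<beta>)
     * (\<Prod>i \<in> vminus E. Gamma (1 + real (din E i) + \<beta>) / Gamma (1 + \<beta>))
     * (\<Prod>(i, j) \<in> E. 1 / ((2 + \<beta>) * (real i powr (1 + \<beta>) * real j) powr (1 / (2 + \<beta>))))"

definition error_sum :: "(nat \<times> nat) set \<Rightarrow> real" where
  "error_sum E = (\<Sum>j = 2..card (fverts E). real (cS E (svert E j))^2 / real (j - 1))"

end

theory Submission
  imports Defs
begin

(*
  For the head map hm of G^n put
     W_n(hm) = [all S-edges with tail <= n are present in G^n]
               * prod_{v <= n} (d_n(v) + beta)^(R_n(v))       (rising factorials),
  where R_n(v) counts the S-edges into v whose tail has not been born yet.
  Averaging over the attachment of v_{n+1} multiplies W_n by an explicit
  step factor, so E[W_t] has a closed product form (expected_weight).  For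
  t >= max V(S) nothing is pending and W_t is the indicator of S <= G^t, hence
  Pr(S <= G^t) = expected_weight EXACTLY.
*)

subsection \<open>One step of the process\<close>

text \<open>Degree of vertex v in G^n (encoded by its head map): one half-edge for its own
  out-edge when v \<ge> 2, plus one per edge pointing to v.\<close>
definition degree :: "(nat \<Rightarrow> nat) \<Rightarrow> nat \<Rightarrow> nat \<Rightarrow> nat" where
  "degree hm n v = (if 2 \<le> v then 1 else 0) + card {i \<in> {2..n}. hm i = v}"

definition attach_norm :: "real \<Rightarrow> nat \<Rightarrow> real" where
  "attach_norm \<beta> n = (2 + \<beta>) * real n - 2"

definition valid_heads :: "nat \<Rightarrow> (nat \<Rightarrow> nat) \<Rightarrow> bool" where
  "valid_heads n hm \<longleftrightarrow> (\<forall>i. 2 \<le> i \<longrightarrow> i \<le> n \<longrightarrow> 1 \<le> hm i \<and> hm i < i)"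

definition choice_space :: "nat \<Rightarrow> choice set" where
  "choice_space n = Cv ` {1..n} \<union> Ch ` {2..n} \<union> Ct ` {2..n}"

lemma finite_choice_space: "finite (choice_space n)"
  unfolding choice_space_def by auto

lemma sum_choice_space:
  "sum h (choice_space n) =
     (\<Sum>i=1..n. h (Cv i)) + (\<Sum>i=2..n. h (Ch i)) + (\<Sum>i=2..n. h (Ct i))"
  unfolding choice_space_def
  by (subst sum.union_disjoint; (auto simp: sum.union_disjoint sum.reindex inj_on_def)?)+

lemma attach_norm_pos: "\<beta> > 0 \<Longrightarrow> n \<ge> 1 \<Longrightarrow> attach_norm \<beta> n > 0"
  unfolding attach_norm_def by (smt (verit, best) mult_le_cancel_left1 of_nat_1 of_nat_mono)

lemma choice_weight_nonneg: "\<beta> > 0 \<Longrightarrow> n \<ge> 1 \<Longrightarrow> 0 \<le> choice_weight \<beta> n c"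
  using attach_norm_pos[of \<beta> n] unfolding choice_weight_def attach_norm_def by (auto split: choice.split)

lemma choice_weight_outside: "c \<notin> choice_space n \<Longrightarrow> choice_weight \<beta> n c = 0"
  unfolding choice_weight_def choice_space_def by (auto split: choice.split)

text \<open>The weights of \<Omega>_{n+1} add up to one: n\<beta> + 2(n-1) = (2+\<beta>)n - 2.\<close>
lemma choice_weight_sum:
  assumes "\<beta> > 0" "n \<ge> 1"
  shows "sum (choice_weight \<beta> n) (choice_space n) = 1"
proof -
  have N: "attach_norm \<beta> n > 0" using attach_norm_pos[OF assms] .
  have "sum (choice_weight \<beta> n) (choice_space n) = (real n * \<beta> + 2 * (real n - 1)) / attach_norm \<beta> n"
    unfolding sum_choice_space using assms
    by (simp add: choice_weight_def attach_norm_def of_nat_diff add_divide_distrib)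
  also have "real n * \<beta> + 2 * (real n - 1) = attach_norm \<beta> n"
    unfolding attach_norm_def by (simp add: algebra_simps)
  finally show ?thesis using N by simp
qed

lemma pmf_choice_pmf:
  assumes "\<beta> > 0" "n \<ge> 1"
  shows "pmf (choice_pmf \<beta> n) c = choice_weight \<beta> n c"
  unfolding choice_pmf_def
proof (rule pmf_embed_pmf)
  show "\<And>x. 0 \<le> choice_weight \<beta> n x" using choice_weight_nonneg[OF assms] .
  have "(\<integral>\<^sup>+x. ennreal (choice_weight \<beta> n x) \<partial>count_space UNIV)
      = (\<Sum>x\<in>choice_space n. ennreal (choice_weight \<beta> n x))"
    by (rule nn_integral_count_space') (auto simp: finite_choice_space choice_weight_outside)
  also have "\<dots> = ennreal (sum (choice_weight \<beta> n) (choice_space n))"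
    by (rule sum_ennreal) (use choice_weight_nonneg[OF assms] in auto)
  finally show "(\<integral>\<^sup>+x. ennreal (choice_weight \<beta> n x) \<partial>count_space UNIV) = 1"
    using choice_weight_sum[OF assms] by simp
qed

lemma set_choice_pmf: "\<beta> > 0 \<Longrightarrow> n \<ge> 1 \<Longrightarrow> set_pmf (choice_pmf \<beta> n) \<subseteq> choice_space n"
  using choice_weight_outside by (force simp: set_pmf_iff pmf_choice_pmf)

lemma sum_by_head:
  fixes G :: "nat \<Rightarrow> real"
  assumes "\<And>i. i \<in> {2..n} \<Longrightarrow> hm i \<in> {1..n}"
  shows "(\<Sum>i=2..n. G (hm i)) = (\<Sum>v=1..n. real (card {i \<in> {2..n}. hm i = v}) * G v)"
proof -
  have "(\<Sum>i=2..n. G (hm i)) = (\<Sum>v=1..n. \<Sum>i\<in>{i \<in> {2..n}. hm i = v}. G (hm i))"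
    by (rule sum.group[symmetric]) (use assms in auto)
  then show ?thesis by simp
qed

lemma expected_attachment:
  assumes "\<beta> > 0" "n \<ge> 1" "valid_heads n hm"
  shows "(\<Sum>c\<in>choice_space n. G (target hm c) * choice_weight \<beta> n c)
       = (\<Sum>v=1..n. G v * (real (degree hm n v) + \<beta>) / attach_norm \<beta> n)"
proof -
  have hm: "\<And>i. i \<in> {2..n} \<Longrightarrow> hm i \<in> {1..n}"
    using assms(3) unfolding valid_heads_def by force
  have heads: "(\<Sum>i=2..n. G (hm i)) = (\<Sum>v=1..n. real (card {i \<in> {2..n}. hm i = v}) * G v)"
    by (rule sum_by_head[OF hm])
  have tails: "(\<Sum>i=2..n. G i) = (\<Sum>v=1..n. (if 2 \<le> v then 1 else 0) * G v)"
    by (rule sum.mono_neutral_cong_left) auto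
  have "(\<Sum>c\<in>choice_space n. G (target hm c) * choice_weight \<beta> n c)
     = (\<Sum>i=1..n. G i * \<beta> / attach_norm \<beta> n) + (\<Sum>i=2..n. G (hm i)) / attach_norm \<beta> n
       + (\<Sum>i=2..n. G i) / attach_norm \<beta> n"
    unfolding sum_choice_space
    by (simp add: choice_weight_def target_def attach_norm_def sum_divide_distrib)
  also have "\<dots> = (\<Sum>v=1..n. G v * \<beta> / attach_norm \<beta> n
       + real (card {i \<in> {2..n}. hm i = v}) * G v / attach_norm \<beta> n
       + (if 2 \<le> v then 1 else 0) * G v / attach_norm \<beta> n)"
    unfolding heads tails by (simp add: sum.distrib sum_divide_distrib)
  also have "\<dots> = (\<Sum>v=1..n. G v * (real (degree hm n v) + \<beta>) / attach_norm \<beta> n)"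
    by (rule sum.cong) (auto simp: degree_def add_divide_distrib algebra_simps)
  finally show ?thesis .
qed

lemma target_range:
  assumes "\<beta> > 0" "n \<ge> 1" "valid_heads n hm" "f \<in> set_pmf (choice_pmf \<beta> n)"
  shows "1 \<le> target hm f \<and> target hm f \<le> n"
proof -
  have "f \<in> choice_space n" using set_choice_pmf[OF assms(1,2)] assms(4) by auto
  then show ?thesis
    using assms(3) unfolding choice_space_def valid_heads_def target_def by fastforce
qed

lemma valid_heads_tree_pmf: "\<beta> > 0 \<Longrightarrow> hm \<in> set_pmf (tree_pmf \<beta> n) \<Longrightarrow> valid_heads n hm"
proof (induction \<beta> n arbitrary: hm rule: tree_pmf.induct)
  case (3 \<beta> n)
  from 3(3) obtain hm0 f where h0: "hm0 \<in> set_pmf (tree_pmf \<beta> (Suc n))"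
    and f: "f \<in> set_pmf (choice_pmf \<beta> (Suc n))" and hm: "hm = hm0(Suc (Suc n) := target hm0 f)"
    by auto
  have v0: "valid_heads (Suc n) hm0" using 3(1)[OF 3(2) h0] .
  have "1 \<le> target hm0 f \<and> target hm0 f \<le> Suc n" using target_range[OF 3(2) _ v0 f] by simp
  then show ?case using v0 unfolding hm valid_heads_def by (auto simp: le_Suc_eq)
qed (auto simp: valid_heads_def)

lemma degree_attach:
  assumes "valid_heads n hm" "u \<in> {1..n}" "v \<in> {1..n}"
  shows "degree (hm(Suc n := v)) (Suc n) u = degree hm n u + (if u = v then 1 else 0)"
proof -
  have "{i \<in> {2..Suc n}. (hm(Suc n := v)) i = u}
      = {i \<in> {2..n}. hm i = u} \<union> (if v = u then {Suc n} else {})"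
    using assms by (auto simp: le_Suc_eq)
  then show ?thesis unfolding degree_def by auto
qed

lemma degree_new_vertex:
  assumes "valid_heads n hm" "v \<le> n" "n \<ge> 1"
  shows "degree (hm(Suc n := v)) (Suc n) (Suc n) = 1"
proof -
  have "{i \<in> {2..Suc n}. (hm(Suc n := v)) i = Suc n} = {}"
    using assms unfolding valid_heads_def by (auto simp: le_Suc_eq)
  then show ?thesis unfolding degree_def using assms by auto
qed

lemma sum_degree:
  assumes "valid_heads n hm" "n \<ge> 1"
  shows "(\<Sum>v=1..n. real (degree hm n v)) = 2 * (real n - 1)"
proof -
  have hm: "\<And>i. i \<in> {2..n} \<Longrightarrow> hm i \<in> {1..n}"
    using assms(1) unfolding valid_heads_def by force
  have "(\<Sum>i=2..n. (\<lambda>_. 1::real) (hm i)) = (\<Sum>v=1..n. real (card {i \<in> {2..n}. hm i = v}) * 1)"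
    by (rule sum_by_head[OF hm])
  then have heads: "(\<Sum>v=1..n. real (card {i \<in> {2..n}. hm i = v})) = real n - 1"
    using assms(2) by (simp add: of_nat_diff)
  have "(\<Sum>v=1..n. (if 2 \<le> v then 1 else 0::real)) = (\<Sum>v=2..n. 1)"
    by (rule sum.mono_neutral_cong_right) auto
  then have tails: "(\<Sum>v=1..n. (if 2 \<le> v then 1 else 0::real)) = real n - 1"
    using assms(2) by (simp add: of_nat_diff)
  have "(\<Sum>v=1..n. real (degree hm n v))
      = (\<Sum>v=1..n. (if 2 \<le> v then 1 else 0::real)) + (\<Sum>v=1..n. real (card {i \<in> {2..n}. hm i = v}))"
    unfolding degree_def by (simp add: sum.distrib) (rule sum.cong, auto)
  then show ?thesis using heads tails by simp
qed

subsection \<open>An exactly computable weight\<close>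

definition has_tail :: "(nat \<times> nat) set \<Rightarrow> nat \<Rightarrow> bool" where
  "has_tail E i \<longleftrightarrow> (\<exists>j. (i, j) \<in> E)"

definition pending_in :: "(nat \<times> nat) set \<Rightarrow> nat \<Rightarrow> nat \<Rightarrow> nat" where
  "pending_in E n v = card {a. (a, v) \<in> E \<and> n < a}"

definition edges_present :: "(nat \<times> nat) set \<Rightarrow> nat \<Rightarrow> (nat \<Rightarrow> nat) \<Rightarrow> bool" where
  "edges_present E n hm \<longleftrightarrow> (\<forall>(i, j) \<in> E. i \<le> n \<longrightarrow> hm i = j)"

definition forest_weight :: "real \<Rightarrow> (nat \<times> nat) set \<Rightarrow> nat \<Rightarrow> (nat \<Rightarrow> nat) \<Rightarrow> real" where
  "forest_weight \<beta> E n hm = (if edges_present E n hm then 1 else 0) *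
     (\<Prod>v\<in>{1..n}. pochhammer (real (degree hm n v) + \<beta>) (pending_in E n v))"

definition step_factor :: "real \<Rightarrow> (nat \<times> nat) set \<Rightarrow> nat \<Rightarrow> real" where
  "step_factor \<beta> E n = (if has_tail E (Suc n) then 1 / attach_norm \<beta> n
     else 1 + real (cS E (Suc n)) / attach_norm \<beta> n)"

definition expected_weight :: "real \<Rightarrow> (nat \<times> nat) set \<Rightarrow> nat \<Rightarrow> real" where
  "expected_weight \<beta> E n = pochhammer \<beta> (din E 1) *
     (\<Prod>m\<in>{1..<n}. step_factor \<beta> E m * pochhammer (1 + \<beta>) (din E (Suc m)))"

lemma finite_edges_into: "finite E \<Longrightarrow> finite {a. (a, v) \<in> E \<and> P a}"
  by (rule finite_subset[of _ "fst ` E"]) force+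

lemma pending_in_Suc:
  assumes "finite E"
  shows "pending_in E n u = pending_in E (Suc n) u + (if (Suc n, u) \<in> E then 1 else 0)"
proof -
  have "{a. (a, u) \<in> E \<and> n < a}
      = {a. (a, u) \<in> E \<and> Suc n < a} \<union> (if (Suc n, u) \<in> E then {Suc n} else {})"
    by auto (metis Suc_lessI)
  then show ?thesis unfolding pending_in_def using finite_edges_into[OF assms] by auto
qed

lemma pending_in_new_vertex:
  assumes "possible_forest E"
  shows "pending_in E n n = din E n"
proof -
  have "{a. (a, n) \<in> E \<and> n < a} = {a. (a, n) \<in> E}"
    using assms unfolding possible_forest_def by auto
  then show ?thesis unfolding pending_in_def din_def by simp
qed

lemma sum_pending_in:
  assumes "possible_forest E"
  shows "(\<Sum>v=1..n. pending_in E n v) = cS E (Suc n)"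
proof -
  let ?S = "{(a, b) \<in> E. Suc n \<le> a \<and> b < Suc n}"
  have fin: "finite ?S"
    by (rule finite_subset[of _ E]) (use assms in \<open>auto simp: possible_forest_def\<close>)
  have "cS E (Suc n) = (\<Sum>x\<in>?S. 1)" unfolding cS_def by simp
  also have "\<dots> = (\<Sum>v=1..n. \<Sum>x\<in>{x \<in> ?S. snd x = v}. 1)"
    by (rule sum.group[symmetric]) (use fin assms in \<open>auto simp: possible_forest_def\<close>)
  also have "\<dots> = (\<Sum>v=1..n. pending_in E n v)"
  proof (rule sum.cong)
    fix v assume "v \<in> {1..n}"
    then have "{x \<in> ?S. snd x = v} = (\<lambda>a. (a, v)) ` {a. (a, v) \<in> E \<and> n < a}" by auto
    then show "(\<Sum>x\<in>{x \<in> ?S. snd x = v}. 1) = pending_in E n v"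
      unfolding pending_in_def by (simp add: card_image inj_on_def)
  qed simp
  finally show ?thesis by simp
qed

lemma prod_pochhammer_raise_base:
  fixes x :: "nat \<Rightarrow> real"
  assumes "finite A" "v \<in> A"
  shows "x v * (\<Prod>u\<in>A. pochhammer (x u + (if u = v then 1 else 0)) (r u))
       = (\<Prod>u\<in>A. pochhammer (x u) (r u + (if u = v then 1 else 0)))"
proof -
  have "x v * (\<Prod>u\<in>A. pochhammer (x u + (if u = v then 1 else 0)) (r u))
      = x v * pochhammer (x v + 1) (r v) * (\<Prod>u\<in>A-{v}. pochhammer (x u) (r u))"
    by (subst prod.remove[OF assms]) (auto intro!: prod.cong)
  also have "\<dots> = (\<Prod>u\<in>A. pochhammer (x u) (r u + (if u = v then 1 else 0)))"
    by (subst prod.remove[OF assms]) (auto intro!: prod.cong simp: pochhammer_rec)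
  finally show ?thesis .
qed

lemma prod_pochhammer_raise_length:
  fixes x :: "nat \<Rightarrow> real"
  assumes "finite A" "v \<in> A"
  shows "(\<Prod>u\<in>A. pochhammer (x u) (r u + (if u = v then 1 else 0)))
       = (x v + r v) * (\<Prod>u\<in>A. pochhammer (x u) (r u))"
proof -
  have "(\<Prod>u\<in>A. pochhammer (x u) (r u + (if u = v then 1 else 0)))
      = pochhammer (x v) (Suc (r v)) * (\<Prod>u\<in>A-{v}. pochhammer (x u) (r u))"
    by (subst prod.remove[OF assms]) (auto intro!: prod.cong)
  also have "\<dots> = (x v + r v) * (pochhammer (x v) (r v) * (\<Prod>u\<in>A-{v}. pochhammer (x u) (r u)))"
    by (simp add: pochhammer_rec' mult_ac)
  also have "\<dots> = (x v + r v) * (\<Prod>u\<in>A. pochhammer (x u) (r u))"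
    by (simp add: prod.remove[OF assms])
  finally show ?thesis .
qed

lemma forest_weight_attach:
  assumes "\<beta> > 0" "possible_forest E" "n \<ge> 1" "valid_heads n hm" "v \<in> {1..n}"
  shows "forest_weight \<beta> E (Suc n) (hm(Suc n := v)) =
    (if edges_present E n hm \<and> (\<forall>j. (Suc n, j) \<in> E \<longrightarrow> j = v) then 1 else 0) *
    (\<Prod>u\<in>{1..n}. pochhammer (real (degree hm n u) + \<beta> + (if u = v then 1 else 0))
                               (pending_in E (Suc n) u)) *
    pochhammer (1 + \<beta>) (din E (Suc n))"
proof -
  have present: "edges_present E (Suc n) (hm(Suc n := v))
      \<longleftrightarrow> edges_present E n hm \<and> (\<forall>j. (Suc n, j) \<in> E \<longrightarrow> j = v)"
    using assms(2) unfolding edges_present_def possible_forest_def by (auto simp: le_Suc_eq)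
  have old: "(\<Prod>u\<in>{Suc 0..n}. pochhammer (real (degree (hm(Suc n := v)) (Suc n) u) + \<beta>)
                                           (pending_in E (Suc n) u))
     = (\<Prod>u\<in>{Suc 0..n}. pochhammer (real (degree hm n u) + \<beta> + (if u = v then 1 else 0))
                                    (pending_in E (Suc n) u))"
    by (rule prod.cong) (use degree_attach[OF assms(4) _ assms(5)] in \<open>auto simp: add_ac\<close>)
  have new: "real (degree (hm(Suc n := v)) (Suc n) (Suc n)) + \<beta> = 1 + \<beta>"
    using degree_new_vertex[OF assms(4) _ assms(3)] assms(5) by simp
  show ?thesis unfolding forest_weight_def
    by (simp add: prod.cl_ivl_Suc present old new pending_in_new_vertex[OF assms(2)] mult.assoc)
qed

text \<open>Weighting the target v by its attractiveness d_n(v) + \<beta> turns the raised bases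
  into one extra pending edge at v.\<close>
lemma attach_summand:
  assumes b: "\<beta> > 0" and pf: "possible_forest E" and n: "n \<ge> 1" and valid: "valid_heads n hm"
    and v: "v \<in> {1..n}"
  shows "forest_weight \<beta> E (Suc n) (hm(Suc n := v)) * (real (degree hm n v) + \<beta>) =
    (if edges_present E n hm \<and> (\<forall>j. (Suc n, j) \<in> E \<longrightarrow> j = v) then 1 else 0) *
    pochhammer (1 + \<beta>) (din E (Suc n)) *
    (\<Prod>u\<in>{1..n}. pochhammer (real (degree hm n u) + \<beta>)
                               (pending_in E (Suc n) u + (if u = v then 1 else 0)))"
  using forest_weight_attach[OF assms]
    prod_pochhammer_raise_base[of "{1..n}" v "\<lambda>u. real (degree hm n u) + \<beta>" "pending_in E (Suc n)"] v
  by (simp add: mult_ac)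

text \<open>If v_{n+1} is the tail of the forest edge (v_{n+1}, v_j), only the target v_j
  contributes, and it converts one pending edge into a present one.\<close>
lemma attach_sum_tail:
  assumes b: "\<beta> > 0" and pf: "possible_forest E" and n: "n \<ge> 1" and valid: "valid_heads n hm"
    and j: "(Suc n, j) \<in> E"
  shows "(\<Sum>v=1..n. forest_weight \<beta> E (Suc n) (hm(Suc n := v)) * (real (degree hm n v) + \<beta>))
       = forest_weight \<beta> E n hm * pochhammer (1 + \<beta>) (din E (Suc n))"
proof -
  define I where "I = (if edges_present E n hm then 1 else 0::real)"
  define P where "P = pochhammer (1 + \<beta>) (din E (Suc n))"
  define Q where "Q v = (\<Prod>u\<in>{1..n}. pochhammer (real (degree hm n u) + \<beta>)
                               (pending_in E (Suc n) u + (if u = v then 1 else 0)))" for v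
  have head: "\<And>u. (Suc n, u) \<in> E \<longleftrightarrow> u = j" using j pf unfolding possible_forest_def by blast
  have jn: "j \<in> {1..n}" using j pf unfolding possible_forest_def by auto
  have "pending_in E (Suc n) u + (if u = j then 1 else 0) = pending_in E n u" for u
    using pending_in_Suc[of E n u] pf head[of u] unfolding possible_forest_def by simp
  then have Qj: "Q j = (\<Prod>u\<in>{1..n}. pochhammer (real (degree hm n u) + \<beta>) (pending_in E n u))"
    unfolding Q_def by simp
  have "(\<Sum>v=1..n. forest_weight \<beta> E (Suc n) (hm(Suc n := v)) * (real (degree hm n v) + \<beta>))
      = (\<Sum>v=1..n. if v = j then I * P * Q j else 0)"
    by (rule sum.cong) (auto simp: attach_summand[OF b pf n valid] head I_def P_def Q_def)
  also have "\<dots> = forest_weight \<beta> E n hm * P"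
    using jn unfolding Qj by (simp add: forest_weight_def I_def)
  finally show ?thesis unfolding P_def .
qed

text \<open>Otherwise every target contributes; by the handshake lemma the attractiveness
  adds up to (2+\<beta>)n - 2 and the pending edges add up to c_S(n+1).\<close>
lemma attach_sum_no_tail:
  assumes b: "\<beta> > 0" and pf: "possible_forest E" and n: "n \<ge> 1" and valid: "valid_heads n hm"
    and no_tail: "\<not> has_tail E (Suc n)"
  shows "(\<Sum>v=1..n. forest_weight \<beta> E (Suc n) (hm(Suc n := v)) * (real (degree hm n v) + \<beta>))
       = forest_weight \<beta> E n hm * pochhammer (1 + \<beta>) (din E (Suc n))
         * (attach_norm \<beta> n + real (cS E (Suc n)))"
proof -
  define X where "X u = real (degree hm n u) + \<beta>" for u
  define R where "R u = pending_in E n u" for u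
  define IP where "IP = (if edges_present E n hm then 1 else 0::real) * pochhammer (1 + \<beta>) (din E (Suc n))"
  define W where "W = (\<Prod>u\<in>{1..n}. pochhammer (X u) (R u))"
  have same: "pending_in E (Suc n) u = R u" for u
    using pending_in_Suc[of E n u] pf no_tail
    unfolding R_def has_tail_def possible_forest_def by auto
  have "(\<Sum>v=1..n. forest_weight \<beta> E (Suc n) (hm(Suc n := v)) * (real (degree hm n v) + \<beta>))
      = (\<Sum>v=1..n. IP * (\<Prod>u\<in>{1..n}. pochhammer (X u) (R u + (if u = v then 1 else 0))))"
    by (rule sum.cong)
      (use no_tail in \<open>auto simp: attach_summand[OF b pf n valid] same has_tail_def IP_def X_def\<close>)
  also have "\<dots> = (\<Sum>v=1..n. IP * W * (X v + real (R v)))"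
    by (rule sum.cong) (simp_all add: prod_pochhammer_raise_length W_def)
  also have "\<dots> = IP * W * ((\<Sum>v=1..n. X v) + (\<Sum>v=1..n. real (R v)))"
    unfolding sum.distrib[symmetric] sum_distrib_left ..
  also have "(\<Sum>v=1..n. X v) = attach_norm \<beta> n"
    unfolding X_def using sum_degree[OF valid n] n
    by (simp add: sum.distrib attach_norm_def algebra_simps)
  also have "(\<Sum>v=1..n. real (R v)) = real (cS E (Suc n))"
    unfolding R_def using sum_pending_in[OF pf, of n] by (metis of_nat_sum)
  finally show ?thesis unfolding IP_def W_def X_def R_def forest_weight_def by (simp add: mult_ac)
qed

lemma step_average:
  assumes b: "\<beta> > 0" and pf: "possible_forest E" and n: "n \<ge> 1" and valid: "valid_heads n hm"
  shows "(\<Sum>v=1..n. forest_weight \<beta> E (Suc n) (hm(Suc n := v)) * ((real (degree hm n v) + \<beta>) / attach_norm \<beta> n))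
       = forest_weight \<beta> E n hm * step_factor \<beta> E n * pochhammer (1 + \<beta>) (din E (Suc n))"
proof -
  have N0: "attach_norm \<beta> n > 0" using attach_norm_pos[OF b n] .
  have "(\<Sum>v=1..n. forest_weight \<beta> E (Suc n) (hm(Suc n := v)) * ((real (degree hm n v) + \<beta>) / attach_norm \<beta> n))
      = (\<Sum>v=1..n. forest_weight \<beta> E (Suc n) (hm(Suc n := v)) * (real (degree hm n v) + \<beta>)) / attach_norm \<beta> n"
    by (simp add: sum_divide_distrib)
  then show ?thesis
    using attach_sum_tail[OF b pf n valid] attach_sum_no_tail[OF b pf n valid] N0
    unfolding step_factor_def has_tail_def by (auto simp: field_simps)
qed

lemma forest_weight_nonneg: "\<beta> > 0 \<Longrightarrow> 0 \<le> forest_weight \<beta> E n hm"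
  unfolding forest_weight_def
  by (auto intro!: prod_nonneg less_imp_le[OF pochhammer_pos] add_nonneg_pos)

lemma step_factor_pos: "\<beta> > 0 \<Longrightarrow> n \<ge> 1 \<Longrightarrow> 0 < step_factor \<beta> E n"
  using attach_norm_pos[of \<beta> n] unfolding step_factor_def by (auto intro!: add_pos_nonneg)

lemma expected_weight_pos: "\<beta> > 0 \<Longrightarrow> 0 < expected_weight \<beta> E n"
  unfolding expected_weight_def
  by (auto intro!: prod_pos mult_pos_pos step_factor_pos pochhammer_pos)

lemma conditional_forest_weight:
  assumes b: "\<beta> > 0" and pf: "possible_forest E" and n: "n \<ge> 1"
    and hm: "hm \<in> set_pmf (tree_pmf \<beta> n)"
  shows "(\<integral>\<^sup>+f. ennreal (forest_weight \<beta> E (Suc n) (hm(Suc n := target hm f))) \<partial>choice_pmf \<beta> n)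
       = ennreal (forest_weight \<beta> E n hm * (step_factor \<beta> E n * pochhammer (1 + \<beta>) (din E (Suc n))))"
proof -
  let ?G = "\<lambda>v. forest_weight \<beta> E (Suc n) (hm(Suc n := v))"
  have valid: "valid_heads n hm" using valid_heads_tree_pmf[OF b hm] .
  have "(\<integral>\<^sup>+f. ennreal (?G (target hm f)) \<partial>choice_pmf \<beta> n)
      = (\<Sum>c\<in>choice_space n. ennreal (?G (target hm c)) * pmf (choice_pmf \<beta> n) c)"
    by (rule nn_integral_measure_pmf_support)
      (use set_choice_pmf[OF b n] finite_choice_space in auto)
  also have "\<dots> = (\<Sum>c\<in>choice_space n. ennreal (?G (target hm c) * choice_weight \<beta> n c))"
    by (rule sum.cong)
      (auto simp: pmf_choice_pmf[OF b n] ennreal_mult forest_weight_nonneg[OF b] choice_weight_nonneg[OF b n])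
  also have "\<dots> = ennreal (\<Sum>c\<in>choice_space n. ?G (target hm c) * choice_weight \<beta> n c)"
    by (rule sum_ennreal)
      (auto intro!: mult_nonneg_nonneg forest_weight_nonneg[OF b] choice_weight_nonneg[OF b n])
  also have "(\<Sum>c\<in>choice_space n. ?G (target hm c) * choice_weight \<beta> n c)
      = (\<Sum>v=1..n. ?G v * ((real (degree hm n v) + \<beta>) / attach_norm \<beta> n))"
    using expected_attachment[OF b n valid] by simp
  also have "\<dots> = forest_weight \<beta> E n hm * (step_factor \<beta> E n * pochhammer (1 + \<beta>) (din E (Suc n)))"
    using step_average[OF b pf n valid] by (simp add: mult.assoc)
  finally show ?thesis .
qed

lemma expected_weight_step:
  assumes b: "\<beta> > 0" and pf: "possible_forest E" and n: "n \<ge> 1"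
  shows "(\<integral>\<^sup>+hm. ennreal (forest_weight \<beta> E (Suc n) hm) \<partial>tree_pmf \<beta> (Suc n))
     = ennreal (step_factor \<beta> E n * pochhammer (1 + \<beta>) (din E (Suc n)))
       * (\<integral>\<^sup>+hm. ennreal (forest_weight \<beta> E n hm) \<partial>tree_pmf \<beta> n)"
proof -
  obtain k where k: "n = Suc k" using n by (cases n) auto
  define s where "s = step_factor \<beta> E n * pochhammer (1 + \<beta>) (din E (Suc n))"
  have s0: "0 \<le> s" unfolding s_def
    using step_factor_pos[OF b n, of E] pochhammer_pos[of "1+\<beta>" "din E (Suc n)"] b by simp
  have "(\<integral>\<^sup>+hm. ennreal (forest_weight \<beta> E (Suc n) hm) \<partial>tree_pmf \<beta> (Suc n))
     = (\<integral>\<^sup>+hm. (\<integral>\<^sup>+f. ennreal (forest_weight \<beta> E (Suc n) (hm(Suc n := target hm f))) \<partial>choice_pmf \<beta> n)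
          \<partial>tree_pmf \<beta> n)"
    unfolding k by simp
  also have "\<dots> = (\<integral>\<^sup>+hm. ennreal s * ennreal (forest_weight \<beta> E n hm) \<partial>tree_pmf \<beta> n)"
    by (rule nn_integral_cong_AE)
      (auto simp: AE_measure_pmf_iff conditional_forest_weight[OF b pf n] s_def[symmetric]
        ennreal_mult forest_weight_nonneg[OF b] s0 mult.commute)
  also have "\<dots> = ennreal s * (\<integral>\<^sup>+hm. ennreal (forest_weight \<beta> E n hm) \<partial>tree_pmf \<beta> n)"
    by (rule nn_integral_cmult) simp
  finally show ?thesis unfolding s_def .
qed

lemma nn_integral_forest_weight:
  assumes b: "\<beta> > 0" and pf: "possible_forest E" and n: "n \<ge> 1"
  shows "(\<integral>\<^sup>+hm. ennreal (forest_weight \<beta> E n hm) \<partial>tree_pmf \<beta> n) = ennreal (expected_weight \<beta> E n)"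
  using n
proof (induction n rule: dec_induct)
  case base
  have "edges_present E (Suc 0) (\<lambda>_. 0)"
    using pf unfolding edges_present_def possible_forest_def by auto
  then show ?case
    by (simp add: forest_weight_def expected_weight_def degree_def pending_in_new_vertex[OF pf])
next
  case (step m)
  define s where "s = step_factor \<beta> E m * pochhammer (1 + \<beta>) (din E (Suc m))"
  have s0: "0 \<le> s" unfolding s_def
    using step_factor_pos[OF b step(1), of E] pochhammer_pos[of "1+\<beta>" "din E (Suc m)"] b by simp
  have "expected_weight \<beta> E (Suc m) = s * expected_weight \<beta> E m"
    unfolding expected_weight_def s_def using step(1) by (simp add: prod.atLeastLessThan_Suc mult_ac)
  then show ?case
    using expected_weight_step[OF b pf step(1)] step(3) s0 expected_weight_pos[OF b, of E m]
    unfolding s_def by (simp add: ennreal_mult)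
qed

text \<open>Once every vertex of the forest exists, nothing is pending and W_t is the
  indicator of the event S \<subseteq> G^t; hence the probability is exactly expected_weight.\<close>
lemma prob_contained_eq_expected_weight:
  assumes b: "\<beta> > 0" and pf: "possible_forest E" and t: "t \<ge> 1"
    and tails: "\<And>i j. (i, j) \<in> E \<Longrightarrow> i \<le> t"
  shows "prob_contained \<beta> t E = expected_weight \<beta> E t"
proof -
  let ?S = "{hm. \<forall>(i, j) \<in> E. i \<le> t \<and> hm i = j}"
  have none_pending: "\<And>v. pending_in E t v = 0"
    unfolding pending_in_def using tails by (auto simp: card_eq_0_iff) (meson leD)
  have indicator: "\<And>hm. ennreal (forest_weight \<beta> E t hm) = indicator ?S hm"
    unfolding forest_weight_def none_pending edges_present_def using tails
    by (auto simp: indicator_def)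
  have "ennreal (prob_contained \<beta> t E) = (\<integral>\<^sup>+hm. indicator ?S hm \<partial>tree_pmf \<beta> t)"
    unfolding prob_contained_def by (simp add: measure_pmf.emeasure_eq_measure)
  also have "\<dots> = ennreal (expected_weight \<beta> E t)"
    unfolding indicator[symmetric] by (rule nn_integral_forest_weight[OF b pf t])
  finally show ?thesis using expected_weight_pos[OF b, of E t] by (simp add: prob_contained_def)
qed

subsection \<open>The closed form as main term times a correction\<close>

lemma sum_steps_shift: "(\<Sum>m\<in>{1..<t}. g (Suc m)) = (\<Sum>i\<in>{2..t}. g i)"
  by (simp add: sum.shift_bounds_Suc_ivl[symmetric] atLeastLessThanSuc_atLeastAtMost numeral_2_eq_2)

lemma prod_steps_shift: "(\<Prod>m\<in>{1..<t}. g (Suc m)) = (\<Prod>i\<in>{2..t}. g i)"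
  by (simp add: prod.shift_bounds_Suc_ivl[symmetric] atLeastLessThanSuc_atLeastAtMost numeral_2_eq_2)

lemma edge_range:
  assumes pf: "possible_forest E" and t: "t \<ge> Max (fverts E)" and e: "(i, j) \<in> E"
  shows "i \<le> t" "1 \<le> j" "j < i"
proof -
  have "finite (fverts E)" using pf unfolding possible_forest_def fverts_def by auto
  moreover have "i \<in> fverts E" using e unfolding fverts_def by force
  ultimately have "i \<le> Max (fverts E)" by (rule Max_ge)
  then show "i \<le> t" using t by simp
  show "1 \<le> j" "j < i" using e pf unfolding possible_forest_def by auto
qed

text \<open>The rising factorials of expected_weight are exactly the \<Gamma>-quotients of the main term:
  vertices outside V^- have in-degree 0, and v_1 starts from \<beta> instead of 1 + \<beta>.\<close>
lemma rising_factorials_eq_gamma_part: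
  assumes b: "\<beta> > 0" and pf: "possible_forest E" and t: "t \<ge> Max (fverts E)" and t1: "t \<ge> 1"
  shows "pochhammer \<beta> (din E 1) * (\<Prod>m\<in>{1..<t}. pochhammer (1 + \<beta>) (din E (Suc m)))
     = \<beta> / (real (din E 1) + \<beta>) * (\<Prod>i\<in>vminus E. Gamma (1 + real (din E i) + \<beta>) / Gamma (1 + \<beta>))"
proof -
  have first: "pochhammer \<beta> (din E 1) = \<beta> / (real (din E 1) + \<beta>) * pochhammer (1 + \<beta>) (din E 1)"
  proof -
    have "(\<beta> + real (din E 1)) * pochhammer \<beta> (din E 1) = \<beta> * pochhammer (1 + \<beta>) (din E 1)"
      using pochhammer_rec[of \<beta> "din E 1"] pochhammer_rec'[of \<beta> "din E 1"]
      by (simp add: add.commute)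
    then show ?thesis using b by (simp add: field_simps)
  qed
  have "{1..t} = insert 1 {2..t}" using t1 by auto
  then have all: "pochhammer (1 + \<beta>) (din E 1) * (\<Prod>m\<in>{1..<t}. pochhammer (1 + \<beta>) (din E (Suc m)))
      = (\<Prod>i\<in>{1..t}. pochhammer (1 + \<beta>) (din E i))"
    using prod_steps_shift[of "\<lambda>i. pochhammer (1 + \<beta>) (din E i)" t] by simp
  have no_in_edges: "din E i = 0" if outside: "i \<notin> vminus E" for i
  proof (rule ccontr)
    assume nonzero: "din E i \<noteq> 0"
    obtain a where a: "(a, i) \<in> E"
      using nonzero unfolding din_def by (metis (no_types, lifting) Collect_empty_eq card.empty)
    then have "a > i" using pf unfolding possible_forest_def by auto
    moreover have "i \<in> fverts E" using a unfolding fverts_def by force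
    ultimately show False using a outside unfolding vminus_def by auto
  qed
  have "vminus E \<subseteq> {1..t}"
    using edge_range[OF pf t] unfolding vminus_def by fastforce
  then have restrict: "(\<Prod>i\<in>{1..t}. pochhammer (1 + \<beta>) (din E i))
      = (\<Prod>i\<in>vminus E. pochhammer (1 + \<beta>) (din E i))"
    by (intro prod.mono_neutral_right) (simp_all add: no_in_edges)
  have "1 + \<beta> \<notin> \<int>\<^sub>\<le>\<^sub>0" using b by auto
  then have gamma: "(\<Prod>i\<in>vminus E. pochhammer (1 + \<beta>) (din E i))
      = (\<Prod>i\<in>vminus E. Gamma (1 + real (din E i) + \<beta>) / Gamma (1 + \<beta>))"
    by (intro prod.cong) (simp_all add: pochhammer_Gamma add_ac)
  have "pochhammer \<beta> (din E 1) * (\<Prod>m\<in>{1..<t}. pochhammer (1 + \<beta>) (din E (Suc m)))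
      = \<beta> / (real (din E 1) + \<beta>)
        * (pochhammer (1 + \<beta>) (din E 1) * (\<Prod>m\<in>{1..<t}. pochhammer (1 + \<beta>) (din E (Suc m))))"
    unfolding first by (rule mult.assoc)
  then show ?thesis unfolding all restrict gamma .
qed

text \<open>The reciprocal of the edge factor of the main term.\<close>
definition edge_scale :: "real \<Rightarrow> nat \<times> nat \<Rightarrow> real" where
  "edge_scale \<beta> e = (2 + \<beta>) * (real (fst e) powr (1 + \<beta>) * real (snd e)) powr (1 / (2 + \<beta>))"

lemma edge_scale_pos: "\<beta> > 0 \<Longrightarrow> fst e \<ge> 1 \<Longrightarrow> snd e \<ge> 1 \<Longrightarrow> edge_scale \<beta> e > 0"
  unfolding edge_scale_def by (auto intro!: mult_pos_pos)

lemma expected_weight_main_term: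
  assumes b: "\<beta> > 0" and pf: "possible_forest E" and t: "t \<ge> Max (fverts E)" and t1: "t \<ge> 1"
  shows "expected_weight \<beta> E t = main_term \<beta> E *
     exp ((\<Sum>m\<in>{1..<t}. ln (step_factor \<beta> E m)) + (\<Sum>e\<in>E. ln (edge_scale \<beta> e)))"
proof -
  have fin: "finite E" using pf unfolding possible_forest_def by auto
  have pos: "\<And>e. e \<in> E \<Longrightarrow> edge_scale \<beta> e > 0"
    using pf b unfolding possible_forest_def by (auto intro!: edge_scale_pos)
  have edges: "(\<Prod>(i, j)\<in>E. 1 / ((2 + \<beta>) * (real i powr (1 + \<beta>) * real j) powr (1 / (2 + \<beta>))))
      * exp (\<Sum>e\<in>E. ln (edge_scale \<beta> e)) = 1"
  proof -
    have "exp (\<Sum>e\<in>E. ln (edge_scale \<beta> e)) = (\<Prod>e\<in>E. edge_scale \<beta> e)"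
      using pos by (simp add: exp_sum[OF fin])
    moreover have "(\<Prod>(i, j)\<in>E. 1 / ((2 + \<beta>) * (real i powr (1 + \<beta>) * real j) powr (1 / (2 + \<beta>))))
        = (\<Prod>e\<in>E. 1 / edge_scale \<beta> e)"
      unfolding edge_scale_def by (simp add: case_prod_unfold)
    moreover have "(\<Prod>e\<in>E. 1 / edge_scale \<beta> e) * (\<Prod>e\<in>E. edge_scale \<beta> e) = 1"
      by (subst prod.distrib[symmetric]) (use pos in \<open>force intro!: prod.neutral\<close>)
    ultimately show ?thesis by simp
  qed
  have steps: "exp (\<Sum>m\<in>{1..<t}. ln (step_factor \<beta> E m)) = (\<Prod>m\<in>{1..<t}. step_factor \<beta> E m)"
    by (simp add: exp_sum step_factor_pos[OF b])
  have "expected_weight \<beta> E t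
      = (pochhammer \<beta> (din E 1) * (\<Prod>m\<in>{1..<t}. pochhammer (1 + \<beta>) (din E (Suc m))))
        * (\<Prod>m\<in>{1..<t}. step_factor \<beta> E m)"
    unfolding expected_weight_def by (simp add: prod.distrib mult_ac)
  then show ?thesis
    unfolding rising_factorials_eq_gamma_part[OF b pf t t1] main_term_def exp_add steps
    using edges by (simp add: mult_ac)
qed

subsection \<open>Elementary logarithmic estimates\<close>

lemma ln_succ_diff_bounds:
  fixes m :: real assumes "m \<ge> 1"
  shows "1 / (m + 1) \<le> ln (m + 1) - ln m" "ln (m + 1) - ln m \<le> 1 / m"
proof -
  have m0: "m > 0" using assms by simp
  have "ln ((m + 1) / m) \<le> (m + 1) / m - 1" by (rule ln_le_minus_one) (use m0 in simp)
  then show "ln (m + 1) - ln m \<le> 1 / m" using m0 by (simp add: ln_div field_simps)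
  have "ln (m / (m + 1)) \<le> m / (m + 1) - 1" by (rule ln_le_minus_one) (use m0 in simp)
  then show "1 / (m + 1) \<le> ln (m + 1) - ln m" using m0 by (simp add: ln_div field_simps)
qed

lemma ln_one_plus_ge: fixes x :: real assumes "x \<ge> 0" shows "x - x\<^sup>2 \<le> ln (1 + x)"
proof (cases "x \<le> 1")
  case True then show ?thesis using ln_one_plus_pos_lower_bound[OF assms True] by simp
next
  case False
  then have "x - x\<^sup>2 \<le> 0" by (simp add: power2_eq_square)
  moreover have "0 \<le> ln (1 + x)" using assms by simp
  ultimately show ?thesis by linarith
qed

text \<open>Step without tail: ln(1 + c/N_m) is c (ln(m+1) - ln m)/(2+\<beta>) up to O(c^2/m^2).
  The number c of crossing edges is an integer, so c \<le> c^2.\<close>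
lemma log_step_no_tail:
  fixes \<beta> m c :: real
  assumes b: "\<beta> > 0" and m: "m \<ge> 1" and c: "c = 0 \<or> c \<ge> 1"
  shows "\<bar>ln (1 + c / ((2 + \<beta>) * m - 2)) - c * (ln (m + 1) - ln m) / (2 + \<beta>)\<bar>
     \<le> (2 / \<beta> + 1 / \<beta>\<^sup>2) * (c\<^sup>2 / m\<^sup>2)"
proof -
  define a where "a = 2 + \<beta>"
  define N where "N = a * m - 2"
  define l where "l = ln (m + 1) - ln m"
  define x where "x = c / N"
  have m0: "m > 0" using m by simp
  have c0: "c \<ge> 0" and cc: "c \<le> c\<^sup>2" using c by (auto simp: power2_eq_square)
  have NB: "N \<ge> \<beta> * m" unfolding N_def a_def using m by (simp add: algebra_simps)
  have N0: "N > 0" using NB b m0 by (smt (verit) mult_pos_pos)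
  have a0: "a > 0" unfolding a_def using b by simp
  have l1: "1 / (m + 1) \<le> l" "l \<le> 1 / m" using ln_succ_diff_bounds[OF m] unfolding l_def by auto
  have x0: "x \<ge> 0" unfolding x_def using c0 N0 by simp
  have upper: "ln (1 + x) - c * l / a \<le> 2 / \<beta> * (c\<^sup>2 / m\<^sup>2)"
  proof -
    have "c * (1 / (m + 1)) / a \<le> c * l / a"
      using mult_left_mono[OF l1(1) c0] a0 by (intro divide_right_mono) auto
    then have "c / (a * (m + 1)) \<le> c * l / a" by (simp add: mult.commute)
    then have "ln (1 + x) - c * l / a \<le> c / N - c / (a * (m + 1))"
      using ln_add_one_self_le_self[OF x0] unfolding x_def by simp
    also have "\<dots> = c * (a + 2) / (N * (a * (m + 1)))"
      using N0 a0 m0 unfolding N_def by (simp add: field_simps)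
    also have "\<dots> \<le> c * (2 * a) / ((\<beta> * m) * (a * m))"
    proof (rule frac_le)
      show "c * (a + 2) \<le> c * (2 * a)" using c0 a_def b by (intro mult_left_mono) auto
      show "\<beta> * m * (a * m) \<le> N * (a * (m + 1))"
        using NB a0 m0 b N0 by (intro mult_mono) (auto simp: algebra_simps)
    qed (use c0 a0 b m0 in auto)
    also have "\<dots> = 2 / \<beta> * (c / m\<^sup>2)"
      using a0 b m0 by (simp add: field_simps power2_eq_square)
    also have "\<dots> \<le> 2 / \<beta> * (c\<^sup>2 / m\<^sup>2)"
      using cc b m0 by (intro mult_left_mono divide_right_mono) auto
    finally show ?thesis .
  qed
  have lower: "- (1 / \<beta>\<^sup>2 * (c\<^sup>2 / m\<^sup>2)) \<le> ln (1 + x) - c * l / a"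
  proof -
    have "c * l / a \<le> c / (a * m)"
      using mult_left_mono[OF l1(2) c0] a0 by (simp add: divide_right_mono field_simps)
    also have "\<dots> \<le> x" unfolding x_def using N0 c0 by (simp add: N_def divide_left_mono)
    finally have "c * l / a \<le> x" .
    moreover have "x \<le> c / (\<beta> * m)"
      unfolding x_def using NB N0 c0 b m0 by (simp add: divide_left_mono)
    then have "x\<^sup>2 \<le> 1 / \<beta>\<^sup>2 * (c\<^sup>2 / m\<^sup>2)"
      using x0 power_mono[of x "c / (\<beta> * m)" 2] by (simp add: power_divide power_mult_distrib)
    ultimately show ?thesis using ln_one_plus_ge[OF x0] by simp
  qed
  have "0 \<le> 2 / \<beta> * (c\<^sup>2 / m\<^sup>2)" "0 \<le> 1 / \<beta>\<^sup>2 * (c\<^sup>2 / m\<^sup>2)" using b by auto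
  moreover have "(2 / \<beta> + 1 / \<beta>\<^sup>2) * (c\<^sup>2 / m\<^sup>2) = 2 / \<beta> * (c\<^sup>2 / m\<^sup>2) + 1 / \<beta>\<^sup>2 * (c\<^sup>2 / m\<^sup>2)"
    by (rule distrib_right)
  ultimately have "\<bar>ln (1 + x) - c * l / a\<bar> \<le> (2 / \<beta> + 1 / \<beta>\<^sup>2) * (c\<^sup>2 / m\<^sup>2)"
    using upper lower unfolding abs_le_iff by linarith
  then show ?thesis unfolding x_def N_def l_def a_def .
qed

text \<open>Step creating a forest edge: ln(1/N_m) is, up to O(c^2/m), the contribution
  -ln((2+\<beta>)(m+1)) of the tail to the edge factor plus the crossing term.\<close>
lemma log_step_tail:
  fixes \<beta> m c :: real
  assumes b: "\<beta> > 0" and m: "m \<ge> 1" and c: "c \<ge> 1"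
  shows "\<bar>ln (1 / ((2 + \<beta>) * m - 2)) - c * (ln (m + 1) - ln m) / (2 + \<beta>) + (ln (2 + \<beta>) + ln (m + 1))\<bar>
     \<le> ((4 + \<beta>) / \<beta> + 1) * (c\<^sup>2 / m)"
proof -
  define a where "a = 2 + \<beta>"
  define N where "N = a * m - 2"
  define l where "l = ln (m + 1) - ln m"
  have m0: "m > 0" using m by simp
  have NB: "N \<ge> \<beta> * m" unfolding N_def a_def using m by (simp add: algebra_simps)
  have N0: "N > 0" using NB b m0 by (smt (verit) mult_pos_pos)
  have a0: "a > 0" unfolding a_def using b by simp
  have l1: "1 / (m + 1) \<le> l" "l \<le> 1 / m" using ln_succ_diff_bounds[OF m] unfolding l_def by auto
  have cc: "c \<le> c\<^sup>2" "1 \<le> c\<^sup>2" using c by (auto simp: power2_eq_square)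
    (smt (verit) mult_le_cancel_left1 mult_le_cancel_right1)
  have ratio: "a * (m + 1) / N \<ge> 1" using N0 a0 m0 unfolding N_def by (simp add: field_simps)
  have log_ratio: "ln (a * (m + 1) / N) \<le> (4 + \<beta>) / \<beta> * (c\<^sup>2 / m)"
  proof -
    have "ln (a * (m + 1) / N) \<le> a * (m + 1) / N - 1" by (rule ln_le_minus_one) (use ratio in simp)
    also have "\<dots> = (a + 2) / N" using N0 unfolding N_def by (simp add: field_simps)
    also have "\<dots> \<le> (a + 2) / (\<beta> * m)" using NB N0 a0 b m0 by (intro divide_left_mono) auto
    also have "\<dots> = (4 + \<beta>) / \<beta> * (1 / m)" unfolding a_def using b m0 by simp
    also have "\<dots> \<le> (4 + \<beta>) / \<beta> * (c\<^sup>2 / m)"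
      using cc b m0 by (intro mult_left_mono divide_right_mono) auto
    finally show ?thesis .
  qed
  have l0: "l \<ge> 0" using l1(1) m0 by (smt (verit) divide_nonneg_nonneg)
  have crossing: "0 \<le> c * l / a" "c * l / a \<le> c\<^sup>2 / m"
  proof -
    show "0 \<le> c * l / a" using c l0 a0 by simp
    have "c * l / a \<le> c * l / 1"
      by (rule divide_left_mono) (use a_def b c l0 in auto)
    also have "\<dots> \<le> c / m" using mult_left_mono[OF l1(2), of c] c by simp
    also have "\<dots> \<le> c\<^sup>2 / m" using cc m0 by (simp add: divide_right_mono)
    finally show "c * l / a \<le> c\<^sup>2 / m" .
  qed
  have "ln (1 / N) + (ln a + ln (m + 1)) = ln (a * (m + 1) / N)"
    using N0 a0 m0 by (simp add: ln_div ln_mult)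
  then have "ln (1 / N) - c * l / a + (ln a + ln (m + 1)) = ln (a * (m + 1) / N) - c * l / a"
    by simp
  moreover have "0 \<le> ln (a * (m + 1) / N)" using ratio by simp
  moreover have "((4 + \<beta>) / \<beta> + 1) * (c\<^sup>2 / m) = (4 + \<beta>) / \<beta> * (c\<^sup>2 / m) + c\<^sup>2 / m"
    by (rule trans[OF distrib_right], simp)
  ultimately have "\<bar>ln (1 / N) - c * l / a + (ln a + ln (m + 1))\<bar> \<le> ((4 + \<beta>) / \<beta> + 1) * (c\<^sup>2 / m)"
    using log_ratio crossing unfolding abs_le_iff by linarith
  then show ?thesis unfolding N_def l_def a_def .
qed

subsection \<open>The correction as a sum of local step errors\<close>

text \<open>The error D_m committed at step m (creation of v_{m+1}): ln of the step factor, minus the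
  share of the edge factors of the main term attributed to that step.  Every forest edge
  crossing the cut between m and m+1 accounts for (ln(m+1) - ln m)/(2+\<beta>), and a tail at
  v_{m+1} accounts for ln((2+\<beta>)(m+1)).\<close>
definition step_error :: "real \<Rightarrow> (nat \<times> nat) set \<Rightarrow> nat \<Rightarrow> real" where
  "step_error \<beta> E m = ln (step_factor \<beta> E m)
     - real (cS E (Suc m)) * (ln (real (Suc m)) - ln (real m)) / (2 + \<beta>)
     + (if has_tail E (Suc m) then ln (2 + \<beta>) + ln (real (Suc m)) else 0)"

text \<open>The size h_m of the step error, up to a constant depending on \<beta> only.\<close>
definition step_error_size :: "(nat \<times> nat) set \<Rightarrow> nat \<Rightarrow> real" where
  "step_error_size E m = (real (cS E (Suc m)))\<^sup>2 / (real m)\<^sup>2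
     + (if has_tail E (Suc m) then (real (cS E (Suc m)))\<^sup>2 / real m else 0)"

definition error_const :: "real \<Rightarrow> real" where
  "error_const \<beta> = (2 / \<beta> + 1 / \<beta>\<^sup>2) + ((4 + \<beta>) / \<beta> + 1)"

text \<open>A tail at v_{m+1} is itself a crossing edge, so c_S(m+1) \<ge> 1.\<close>
lemma cS_pos_at_tail:
  assumes pf: "possible_forest E" and tail: "has_tail E (Suc m)"
  shows "cS E (Suc m) \<ge> 1"
proof -
  obtain j where j: "(Suc m, j) \<in> E" using tail unfolding has_tail_def by auto
  have "finite {(a, b) \<in> E. Suc m \<le> a \<and> b < Suc m}"
    by (rule finite_subset[of _ E]) (use pf in \<open>auto simp: possible_forest_def\<close>)
  moreover have "(Suc m, j) \<in> {(a, b) \<in> E. Suc m \<le> a \<and> b < Suc m}"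
    using j pf unfolding possible_forest_def by auto
  ultimately have "card {(a, b) \<in> E. Suc m \<le> a \<and> b < Suc m} > 0" using card_gt_0_iff by blast
  then show ?thesis unfolding cS_def by simp
qed

lemma step_error_bound:
  assumes b: "\<beta> > 0" and pf: "possible_forest E" and m: "m \<ge> 1"
  shows "\<bar>step_error \<beta> E m\<bar> \<le> error_const \<beta> * step_error_size E m"
proof -
  define c where "c = real (cS E (Suc m))"
  have mr: "real m \<ge> 1" using m by simp
  have K: "0 \<le> 2 / \<beta> + 1 / \<beta>\<^sup>2" "0 \<le> (4 + \<beta>) / \<beta> + 1" using b by auto
  have const: "error_const \<beta> * h = (2 / \<beta> + 1 / \<beta>\<^sup>2) * h + ((4 + \<beta>) / \<beta> + 1) * h" for h
    unfolding error_const_def by (rule distrib_right)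
  show ?thesis
  proof (cases "has_tail E (Suc m)")
    case True
    have c1: "c \<ge> 1" unfolding c_def using cS_pos_at_tail[OF pf True] by simp
    have bound: "\<bar>step_error \<beta> E m\<bar> \<le> ((4 + \<beta>) / \<beta> + 1) * (c\<^sup>2 / real m)"
      using log_step_tail[OF b mr c1] True
      unfolding step_error_def step_factor_def attach_norm_def c_def by (simp add: add.commute)
    have size: "step_error_size E m = c\<^sup>2 / (real m)\<^sup>2 + c\<^sup>2 / real m"
      unfolding step_error_size_def c_def using True by simp
    have "((4 + \<beta>) / \<beta> + 1) * (c\<^sup>2 / real m) \<le> ((4 + \<beta>) / \<beta> + 1) * (c\<^sup>2 / (real m)\<^sup>2 + c\<^sup>2 / real m)"
      using K(2) by (intro mult_left_mono) auto
    moreover have "0 \<le> (2 / \<beta> + 1 / \<beta>\<^sup>2) * (c\<^sup>2 / (real m)\<^sup>2 + c\<^sup>2 / real m)"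
      using K(1) by simp
    ultimately show ?thesis unfolding const size using bound by linarith
  next
    case False
    have c01: "c = 0 \<or> c \<ge> 1" unfolding c_def by auto
    have bound: "\<bar>step_error \<beta> E m\<bar> \<le> (2 / \<beta> + 1 / \<beta>\<^sup>2) * (c\<^sup>2 / (real m)\<^sup>2)"
      using log_step_no_tail[OF b mr c01] False
      unfolding step_error_def step_factor_def attach_norm_def c_def by (simp add: add.commute)
    have size: "step_error_size E m = c\<^sup>2 / (real m)\<^sup>2"
      unfolding step_error_size_def c_def using False by simp
    have "0 \<le> ((4 + \<beta>) / \<beta> + 1) * (c\<^sup>2 / (real m)\<^sup>2)" using K(2) by simp
    then show ?thesis unfolding const size using bound by linarith
  qed
qed

lemma ln_edge_scale:
  assumes b: "\<beta> > 0" and i: "i \<ge> 1" and j: "j \<ge> 1"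
  shows "ln (edge_scale \<beta> (i, j)) = ln (2 + \<beta>) + ln (real i) - (ln (real i) - ln (real j)) / (2 + \<beta>)"
proof -
  have "ln (edge_scale \<beta> (i, j)) = ln (2 + \<beta>) + ((1 + \<beta>) * ln (real i) + ln (real j)) / (2 + \<beta>)"
    unfolding edge_scale_def using b i j by (simp add: ln_mult)
  also have "\<dots> = ln (2 + \<beta>) + ln (real i) - (ln (real i) - ln (real j)) / (2 + \<beta>)"
    using b by (simp add: field_simps)
  finally show ?thesis .
qed

text \<open>Telescoping: the edge (i, j) crosses exactly the cuts m = j..i-1, and
  the increments ln(m+1) - ln m add up to ln i - ln j.\<close>
lemma sum_crossing_logs:
  assumes pf: "possible_forest E" and t: "t \<ge> Max (fverts E)"
  shows "(\<Sum>m\<in>{1..<t}. real (cS E (Suc m)) * (ln (real (Suc m)) - ln (real m)))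
       = (\<Sum>e\<in>E. ln (real (fst e)) - ln (real (snd e)))"
proof -
  have fin: "finite E" using pf unfolding possible_forest_def by auto
  define d where "d m = ln (real (Suc m)) - ln (real m)" for m
  have crossing: "real (cS E (Suc m)) = (\<Sum>e\<in>E. if snd e \<le> m \<and> m < fst e then 1 else 0)" for m
  proof -
    have "{(a, b) \<in> E. Suc m \<le> a \<and> b < Suc m} = {e \<in> E. snd e \<le> m \<and> m < fst e}" by auto
    then show ?thesis unfolding cS_def by (simp add: sum.inter_filter[OF fin, symmetric])
  qed
  have per_edge: "(\<Sum>m\<in>{1..<t}. (if snd e \<le> m \<and> m < fst e then 1 else 0) * d m)
      = ln (real (fst e)) - ln (real (snd e))" if e: "e \<in> E" for e
  proof -
    obtain i j where ij: "e = (i, j)" by (cases e)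
    have r: "i \<le> t" "1 \<le> j" "j < i" using edge_range[OF pf t, of i j] e ij by auto
    have "(\<Sum>m\<in>{1..<t}. (if snd e \<le> m \<and> m < fst e then 1 else 0) * d m)
        = (\<Sum>m\<in>{1..<t}. if j \<le> m \<and> m < i then d m else 0)"
      unfolding ij by (rule sum.cong) auto
    also have "\<dots> = sum d {m \<in> {1..<t}. j \<le> m \<and> m < i}"
      by (rule sum.inter_filter[symmetric]) simp
    also have "{m \<in> {1..<t}. j \<le> m \<and> m < i} = {j..<i}" using r by auto
    also have "sum d {j..<i} = ln (real i) - ln (real j)"
      unfolding d_def using sum_Suc_diff'[of j i "\<lambda>m. ln (real m)"] r by simp
    finally show ?thesis unfolding ij by simp
  qed
  have "(\<Sum>m\<in>{1..<t}. real (cS E (Suc m)) * d m)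
      = (\<Sum>e\<in>E. \<Sum>m\<in>{1..<t}. (if snd e \<le> m \<and> m < fst e then 1 else 0) * d m)"
    unfolding crossing sum_distrib_right by (rule sum.swap)
  also have "\<dots> = (\<Sum>e\<in>E. ln (real (fst e)) - ln (real (snd e)))"
    by (rule sum.cong) (rule refl, rule per_edge)
  finally show ?thesis unfolding d_def .
qed

text \<open>Each vertex is the tail of at most one forest edge, so summing over the steps that
  create a tail is summing over the edges.\<close>
lemma sum_over_tails:
  fixes h :: "nat \<Rightarrow> real"
  assumes pf: "possible_forest E" and t: "t \<ge> Max (fverts E)"
  shows "(\<Sum>m\<in>{1..<t}. if has_tail E (Suc m) then h (Suc m) else 0) = (\<Sum>e\<in>E. h (fst e))"
proof -
  have tails: "{i \<in> {2..t}. has_tail E i} = fst ` E"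
    using edge_range[OF pf t] unfolding has_tail_def by force
  have inj: "inj_on fst E" using pf unfolding possible_forest_def inj_on_def by auto
  have "(\<Sum>m\<in>{1..<t}. if has_tail E (Suc m) then h (Suc m) else 0)
      = (\<Sum>i\<in>{2..t}. if has_tail E i then h i else 0)"
    by (rule sum_steps_shift)
  also have "\<dots> = sum h {i \<in> {2..t}. has_tail E i}" by (rule sum.inter_filter[symmetric]) simp
  also have "\<dots> = sum h (fst ` E)" unfolding tails ..
  also have "\<dots> = (\<Sum>e\<in>E. h (fst e))" by (simp add: sum.reindex[OF inj])
  finally show ?thesis .
qed

lemma expected_weight_eq_step_errors:
  assumes b: "\<beta> > 0" and pf: "possible_forest E" and t: "t \<ge> Max (fverts E)" and t1: "t \<ge> 1"
  shows "expected_weight \<beta> E t = main_term \<beta> E * exp (\<Sum>m\<in>{1..<t}. step_error \<beta> E m)"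
proof -
  have edges: "(\<Sum>e\<in>E. ln (edge_scale \<beta> e))
      = (\<Sum>e\<in>E. ln (2 + \<beta>) + ln (real (fst e)))
        - (\<Sum>e\<in>E. ln (real (fst e)) - ln (real (snd e))) / (2 + \<beta>)"
  proof -
    have "ln (edge_scale \<beta> e) = ln (2 + \<beta>) + ln (real (fst e))
        - (ln (real (fst e)) - ln (real (snd e))) / (2 + \<beta>)" if "e \<in> E" for e
      using that pf ln_edge_scale[OF b, of "fst e" "snd e"] unfolding possible_forest_def by auto
    then show ?thesis by (simp add: sum_subtractf sum_divide_distrib[symmetric])
  qed
  have "(\<Sum>m\<in>{1..<t}. step_error \<beta> E m) = (\<Sum>m\<in>{1..<t}. ln (step_factor \<beta> E m))
     - (\<Sum>m\<in>{1..<t}. real (cS E (Suc m)) * (ln (real (Suc m)) - ln (real m))) / (2 + \<beta>)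
     + (\<Sum>m\<in>{1..<t}. if has_tail E (Suc m) then ln (2 + \<beta>) + ln (real (Suc m)) else 0)"
    unfolding step_error_def by (simp add: sum.distrib sum_subtractf sum_divide_distrib)
  also have "\<dots> = (\<Sum>m\<in>{1..<t}. ln (step_factor \<beta> E m)) + (\<Sum>e\<in>E. ln (edge_scale \<beta> e))"
    unfolding sum_crossing_logs[OF pf t]
      sum_over_tails[OF pf t, of "\<lambda>i. ln (2 + \<beta>) + ln (real i)"] edges by simp
  finally show ?thesis using expected_weight_main_term[OF b pf t t1] by simp
qed

subsection \<open>Summing the step errors between consecutive forest vertices\<close>

text \<open>Tail of the series of 1/m^2, by comparison with the telescoping 2/(m(m+1)).\<close>
lemma sum_inverse_squares_le:
  assumes lo: "1 \<le> lo" and lh: "lo \<le> hi"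
  shows "(\<Sum>m\<in>{lo..<hi}. 1 / (real m)\<^sup>2) \<le> 2 / real lo"
proof -
  have each: "1 / (real m)\<^sup>2 \<le> 2 * (1 / real m - 1 / real (Suc m))" if "m \<ge> 1" for m
  proof -
    have m0: "real m \<ge> 1" using that by simp
    have "1 / (real m)\<^sup>2 \<le> 2 / (real m * (real m + 1))"
      using m0 by (simp add: divide_simps power2_eq_square)
    also have "\<dots> = 2 * (1 / real m - 1 / real (Suc m))"
      using m0 by (simp add: field_simps)
    finally show ?thesis .
  qed
  have "(\<Sum>m\<in>{lo..<hi}. 1 / (real m)\<^sup>2) \<le> (\<Sum>m\<in>{lo..<hi}. 2 * (1 / real m - 1 / real (Suc m)))"
    by (rule sum_mono) (use each lo in auto)
  also have "\<dots> = 2 * (\<Sum>m\<in>{lo..<hi}. (- (1 / real (Suc m))) - (- (1 / real m)))"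
    by (simp add: sum_distrib_left)
  also have "(\<Sum>m\<in>{lo..<hi}. (- (1 / real (Suc m))) - (- (1 / real m))) = 1 / real lo - 1 / real hi"
    using sum_Suc_diff'[OF lh, of "\<lambda>m. - (1 / real m)"] by simp
  also have "2 * (1 / real lo - 1 / real hi) \<le> 2 / real lo" by simp
  finally show ?thesis .
qed

lemma sum_step_errors_bound:
  assumes b: "\<beta> > 0" and pf: "possible_forest E"
  shows "\<bar>\<Sum>m\<in>{1..<t}. step_error \<beta> E m\<bar> \<le> error_const \<beta> * (\<Sum>m\<in>{1..<t}. step_error_size E m)"
proof -
  have "\<bar>\<Sum>m\<in>{1..<t}. step_error \<beta> E m\<bar> \<le> (\<Sum>m\<in>{1..<t}. \<bar>step_error \<beta> E m\<bar>)"
    by (rule sum_abs)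
  also have "\<dots> \<le> (\<Sum>m\<in>{1..<t}. error_const \<beta> * step_error_size E m)"
    by (rule sum_mono) (rule step_error_bound[OF b pf], simp)
  finally show ?thesis by (simp add: sum_distrib_left)
qed

text \<open>Without crossing edges there is no tail either, and the step error vanishes.\<close>
lemma step_error_size_no_crossing:
  assumes "possible_forest E" "cS E (Suc m) = 0"
  shows "step_error_size E m = 0"
  using assms cS_pos_at_tail[OF assms(1), of m] unfolding step_error_size_def by auto

text \<open>Setting for the summation: the vertices s_1 < ... < s_k of a non-empty forest,
  stored 0-based as the sorted list vs.\<close>
locale forest_vertices =
  fixes E :: "(nat \<times> nat) set"
  assumes pf: "possible_forest E" and nonempty: "E \<noteq> {}"
begin

definition vs :: "nat list" where "vs = sorted_list_of_set (fverts E)"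
definition k :: nat where "k = length vs"

lemma finite_fverts: "finite (fverts E)"
  using pf unfolding possible_forest_def fverts_def by auto

lemma set_vs: "set vs = fverts E" unfolding vs_def using finite_fverts by simp

lemma k_eq_card: "k = card (fverts E)" unfolding k_def vs_def using finite_fverts by simp

lemma tail_in: "(a, b) \<in> E \<Longrightarrow> a \<in> fverts E" unfolding fverts_def by force
lemma head_in: "(a, b) \<in> E \<Longrightarrow> b \<in> fverts E" unfolding fverts_def by force
lemma head_less: "(a, b) \<in> E \<Longrightarrow> b < a" using pf unfolding possible_forest_def by auto
lemma vertex_pos: "u \<in> fverts E \<Longrightarrow> u \<ge> 1"
  using pf unfolding fverts_def possible_forest_def by force

lemma vs_in: "q < k \<Longrightarrow> vs ! q \<in> fverts E" unfolding k_def using set_vs nth_mem by blast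

lemma vs_less: "q < r \<Longrightarrow> r < k \<Longrightarrow> vs ! q < vs ! r"
  using sorted_wrt_nth_less[of "(<)" vs] unfolding k_def vs_def by simp

lemma vs_le: "q \<le> r \<Longrightarrow> r < k \<Longrightarrow> vs ! q \<le> vs ! r"
  using vs_less by (cases "q = r") (auto intro: less_imp_le)

lemma vs_index: assumes "u \<in> fverts E" obtains r where "r < k" "vs ! r = u"
proof -
  have "u \<in> set vs" using assms set_vs by simp
  then show ?thesis using that unfolding in_set_conv_nth k_def by blast
qed

lemma vs_ge: "q < k \<Longrightarrow> vs ! q \<ge> Suc q"
proof (induction q)
  case 0 then show ?case using vertex_pos vs_in by fastforce
next
  case (Suc q) then show ?case using vs_less[of q "Suc q"] by simp
qed

lemma vs_next: assumes "Suc q < k" "u \<in> fverts E" "vs ! q < u" shows "vs ! Suc q \<le> u"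
proof -
  obtain r where r: "r < k" "vs ! r = u" using vs_index[OF assms(2)] .
  have "\<not> r \<le> q" using vs_le[of r q] assms r by auto
  then show ?thesis using vs_le[of "Suc q" r] r by auto
qed

lemma two_le_k: "k \<ge> 2"
proof -
  obtain a b where e: "(a, b) \<in> E" using nonempty by auto
  have "card {a, b} = 2" using head_less[OF e] by auto
  then show ?thesis
    using card_mono[OF finite_fverts, of "{a, b}"] tail_in[OF e] head_in[OF e]
    unfolding k_eq_card by simp
qed

lemma no_crossing_outside:
  assumes "m < vs ! 0 \<or> vs ! (k - 1) \<le> m"
  shows "cS E (Suc m) = 0"
proof -
  have none: "{(a, b) \<in> E. Suc m \<le> a \<and> b < Suc m} = {}"
  proof (rule ccontr)
    assume "{(a, b) \<in> E. Suc m \<le> a \<and> b < Suc m} \<noteq> {}"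
    then obtain a b where e: "(a, b) \<in> E" "Suc m \<le> a" "b < Suc m" by auto
    obtain r where "r < k" "vs ! r = b" using vs_index[OF head_in[OF e(1)]] .
    then have "vs ! 0 \<le> b" using vs_le[of 0 r] by auto
    moreover obtain r' where "r' < k" "vs ! r' = a" using vs_index[OF tail_in[OF e(1)]] .
    then have "a \<le> vs ! (k - 1)" using vs_le[of r' "k - 1"] by auto
    ultimately show False using assms e by auto
  qed
  show ?thesis unfolding cS_def none by simp
qed

lemma crossing_constant:
  assumes q: "Suc q < k" and m: "vs ! q \<le> m" "m < vs ! Suc q"
  shows "cS E (Suc m) = cS E (vs ! Suc q)"
proof -
  have cut: "(Suc m \<le> a \<and> b < Suc m) \<longleftrightarrow> (vs ! Suc q \<le> a \<and> b < vs ! Suc q)"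
    if e: "(a, b) \<in> E" for a b
  proof
    assume "Suc m \<le> a \<and> b < Suc m"
    then show "vs ! Suc q \<le> a \<and> b < vs ! Suc q" using vs_next[OF q tail_in[OF e]] m by auto
  next
    assume below: "vs ! Suc q \<le> a \<and> b < vs ! Suc q"
    then have "\<not> vs ! q < b" using vs_next[OF q head_in[OF e]] by auto
    then show "Suc m \<le> a \<and> b < Suc m" using below m by auto
  qed
  then have "{(a, b) \<in> E. Suc m \<le> a \<and> b < Suc m} = {(a, b) \<in> E. vs ! Suc q \<le> a \<and> b < vs ! Suc q}"
    by auto
  then show ?thesis unfolding cS_def by simp
qed

lemma tail_at_block_end:
  assumes q: "Suc q < k" and m: "vs ! q \<le> m" "m < vs ! Suc q" and tail: "has_tail E (Suc m)"
  shows "Suc m = vs ! Suc q"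
proof -
  obtain j where j: "(Suc m, j) \<in> E" using tail unfolding has_tail_def by auto
  show ?thesis using vs_next[OF q tail_in[OF j]] m by simp
qed

text \<open>The block vs!q \<le> m < vs!(q+1) contributes at most 3 c^2/(q+1), c = c_S(vs!(q+1)):
  the terms c^2/m^2 sum to at most 2c^2/vs!q, the single tail term is at most
  c^2/(vs!(q+1) - 1), and vs!q \<ge> q+1.\<close>
lemma block_error_size:
  assumes q: "Suc q < k"
  shows "(\<Sum>m\<in>{vs ! q..<vs ! Suc q}. step_error_size E m) \<le> 3 * ((real (cS E (vs ! Suc q)))\<^sup>2 / real (Suc q))"
proof -
  define lo where "lo = vs ! q"
  define hi where "hi = vs ! Suc q"
  define C where "C = (real (cS E hi))\<^sup>2"
  have lo1: "lo \<ge> Suc q" unfolding lo_def using vs_ge q by simp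
  have lohi: "lo < hi" unfolding lo_def hi_def using vs_less q by simp
  have each: "step_error_size E m \<le> C * (1 / (real m)\<^sup>2) + (if m = hi - 1 then C / real (hi - 1) else 0)"
    if "m \<in> {lo..<hi}" for m
  proof -
    have mr: "vs ! q \<le> m" "m < vs ! Suc q" using that unfolding lo_def hi_def by auto
    have size: "step_error_size E m = C / (real m)\<^sup>2 + (if has_tail E (Suc m) then C / real m else 0)"
      unfolding step_error_size_def crossing_constant[OF q mr] C_def hi_def ..
    show ?thesis
    proof (cases "has_tail E (Suc m)")
      case True
      then have "m = hi - 1" using tail_at_block_end[OF q mr] unfolding hi_def by simp
      then show ?thesis unfolding size using True by simp
    next
      case False
      have "0 \<le> (if m = hi - 1 then C / real (hi - 1) else 0)" unfolding C_def by simp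
      then show ?thesis unfolding size using False by simp
    qed
  qed
  have "(\<Sum>m\<in>{lo..<hi}. step_error_size E m)
      \<le> (\<Sum>m\<in>{lo..<hi}. C * (1 / (real m)\<^sup>2) + (if m = hi - 1 then C / real (hi - 1) else 0))"
    by (rule sum_mono) (rule each)
  also have "\<dots> = C * (\<Sum>m\<in>{lo..<hi}. 1 / (real m)\<^sup>2) + C / real (hi - 1)"
    using lohi by (simp add: sum.distrib sum_distrib_left)
  also have "\<dots> \<le> C * (2 / real (Suc q)) + C / real (Suc q)"
  proof (rule add_mono)
    have "(\<Sum>m\<in>{lo..<hi}. 1 / (real m)\<^sup>2) \<le> 2 / real lo"
      using sum_inverse_squares_le[of lo hi] lo1 lohi by simp
    also have "\<dots> \<le> 2 / real (Suc q)" using lo1 by (intro divide_left_mono) auto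
    finally have "(\<Sum>m\<in>{lo..<hi}. 1 / (real m)\<^sup>2) \<le> 2 / real (Suc q)" .
    then show "C * (\<Sum>m\<in>{lo..<hi}. 1 / (real m)\<^sup>2) \<le> C * (2 / real (Suc q))"
      unfolding C_def by (rule mult_left_mono) simp
    show "C / real (hi - 1) \<le> C / real (Suc q)"
      unfolding C_def using lo1 lohi by (intro divide_left_mono) auto
  qed
  also have "\<dots> = 3 * (C / real (Suc q))" by simp
  finally show ?thesis unfolding lo_def hi_def C_def .
qed

lemma error_sum_eq: "error_sum E = (\<Sum>p\<in>{1..k - 1}. (real (cS E (vs ! p)))\<^sup>2 / real p)"
proof -
  have "error_sum E = (\<Sum>p\<in>{1..<k}. (real (cS E (svert E (Suc p))))\<^sup>2 / real (Suc p - 1))"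
    unfolding error_sum_def k_eq_card[symmetric] by (rule sum_steps_shift[symmetric])
  moreover have "{1..<k} = {1..k - 1}" using two_le_k by auto
  ultimately show ?thesis unfolding svert_def vs_def by simp
qed

lemma error_size_upto:
  "q < k \<Longrightarrow> (\<Sum>m\<in>{vs ! 0..<vs ! q}. step_error_size E m)
      \<le> 3 * (\<Sum>p\<in>{1..q}. (real (cS E (vs ! p)))\<^sup>2 / real p)"
proof (induction q)
  case (Suc q)
  have "(\<Sum>m\<in>{vs ! 0..<vs ! Suc q}. step_error_size E m)
      = (\<Sum>m\<in>{vs ! 0..<vs ! q}. step_error_size E m) + (\<Sum>m\<in>{vs ! q..<vs ! Suc q}. step_error_size E m)"
    using vs_le[of 0 q] vs_le[of q "Suc q"] Suc(2) by (simp add: sum.atLeastLessThan_concat)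
  also have "\<dots> \<le> 3 * (\<Sum>p\<in>{1..q}. (real (cS E (vs ! p)))\<^sup>2 / real p)
      + 3 * ((real (cS E (vs ! Suc q)))\<^sup>2 / real (Suc q))"
    using Suc.IH block_error_size[OF Suc(2)] Suc(2) by (intro add_mono) auto
  finally show ?case by (simp add: distrib_left)
qed simp

lemma total_error_size:
  assumes t: "t \<ge> Max (fverts E)"
  shows "(\<Sum>m\<in>{1..<t}. step_error_size E m) \<le> 3 * error_sum E"
proof -
  have last: "k - 1 < k" using two_le_k by simp
  have "vs ! (k - 1) \<le> Max (fverts E)" by (rule Max_ge[OF finite_fverts vs_in[OF last]])
  then have "vs ! (k - 1) \<le> t" using t by simp
  moreover have "1 \<le> vs ! 0" using vertex_pos vs_in two_le_k by simp
  ultimately have "(\<Sum>m\<in>{1..<t}. step_error_size E m) = (\<Sum>m\<in>{vs ! 0..<vs ! (k - 1)}. step_error_size E m)"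
    by (intro sum.mono_neutral_right)
      (auto intro!: step_error_size_no_crossing[OF pf] no_crossing_outside)
  also have "\<dots> \<le> 3 * error_sum E" unfolding error_sum_eq by (rule error_size_upto[OF last])
  finally show ?thesis .
qed

end

theorem lemma2:
  fixes \<beta> :: real
  assumes "\<beta> > 0"
  shows "\<exists>C. \<forall>E t. possible_forest E \<longrightarrow> E \<noteq> {} \<longrightarrow> t \<ge> Max (fverts E) \<longrightarrow>
           (\<exists>\<epsilon>. \<bar>\<epsilon>\<bar> \<le> C * error_sum E \<and>
                prob_contained \<beta> t E = main_term \<beta> E * exp \<epsilon>)"
proof (rule exI[of _ "3 * error_const \<beta>"], intro allI impI)
  fix E t
  assume pf: "possible_forest E" and ne: "E \<noteq> {}" and t: "t \<ge> Max (fverts E)"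
  interpret forest_vertices E using pf ne by unfold_locales
  obtain i j where "(i, j) \<in> E" using ne by auto
  then have t1: "t \<ge> 1" using edge_range[OF pf t] by fastforce
  define \<epsilon> where "\<epsilon> = (\<Sum>m\<in>{1..<t}. step_error \<beta> E m)"
  have "prob_contained \<beta> t E = main_term \<beta> E * exp \<epsilon>"
    using prob_contained_eq_expected_weight[OF assms pf t1 edge_range(1)[OF pf t]]
      expected_weight_eq_step_errors[OF assms pf t t1] unfolding \<epsilon>_def by simp
  moreover have "\<bar>\<epsilon>\<bar> \<le> 3 * error_const \<beta> * error_sum E"
  proof -
    have K: "0 \<le> error_const \<beta>" unfolding error_const_def using assms by simp
    have "error_const \<beta> * (\<Sum>m\<in>{1..<t}. step_error_size E m) \<le> error_const \<beta> * (3 * error_sum E)"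
      using total_error_size[OF t] K by (rule mult_left_mono)
    then show ?thesis using sum_step_errors_bound[OF assms pf, of t] unfolding \<epsilon>_def by simp
  qed
  ultimately show "\<exists>\<epsilon>. \<bar>\<epsilon>\<bar> \<le> 3 * error_const \<beta> * error_sum E \<and> prob_contained \<beta> t E = main_term \<beta> E * exp \<epsilon>"
    by blast
qed

end
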